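(* Consider the online optimization problem with multi-step memory cost described in the context. Assume that for every $t$ the hitting cost $f(\cdot,y_t)$ is $\alpha$-polyhedral for some $\alpha>0$, and let $\beta=\sum_{i=1}^q\|C_i\|$, where $\|C_i\|$ is the matrix norm induced by the $l_p$ vector norm. Let the expert $\pi$ be the algorithm Robust, which chooses $x_t^\pi=\arg\min_{x\in\mathcal X}f(x,y_t)$ for every $t=1,\dots,T$. Then for any $\lambda\ge1$ and $B\ge0$, ERL (with parameters $\lambda,B$, expert Robust and arbitrary proposed actions) satisfies, for every input $\bm s$, $$\mathrm{cost}(\mathrm{ERL},\bm s)\le \lambda\max\!\left(\tfrac{\beta+1}{\alpha},1\right)\mathrm{cost}(\mathrm{OPT},\bm s)+B.$$
   Context: Problem: Let $\mathcal X\subseteq\mathbb R^d$, $\mathcal Y\subseteq\mathbb R^m$, $f:\mathcal X\times\mathcal Y\to[0,\infty)$, $\|\cdot\|$ the $l_p$ norm on $\mathbb R^d$ ($p\ge1$), a memory length $q\ge1$ and matrices $C_1,\dots,C_q\in\mathbb R^{d\times d}$. An instance $\bm s$ consists of given initial actions $x_{1-q},\dots,x_0\in\mathcal X$ (shared by all algorithms) and contexts $y_1,\dots,y_T\in\mathcal Y$. At step $t$ the context $y_t$ is revealed and an online algorithm irrevocably chooses $x_t\in\mathcal X$. The memory cost is $d(x_t,x_{t-q:t-1})=\|x_t-\sum_{i=1}^q C_ix_{t-i}\|$; for a sequence, $\mathrm{cost}(x_{1:t})=\sum_{\tau=1}^t f(x_\tau,y_\tau)+d(x_\tau,x_{\tau-q:\tau-1})$,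 and the total cost of an algorithm is $\mathrm{cost}(x_{1:T})$ of its actions. $\mathrm{cost}(\mathrm{OPT},\bm s)$ is the infimum of the total cost over all $x_1,\dots,x_T\in\mathcal X$ (offline, all contexts known). $\alpha$-polyhedral: $f(\cdot,y)$ has a unique minimizer $x^*\in\mathcal X$ and $f(x,y)-f(x^*,y)\ge\alpha\|x-x^*\|$ for all $x\in\mathcal X$. ERL (multi-step): given $\lambda\ge1$, $B\ge0$, an expert online algorithm $\pi$ running independently with actions $x_t^\pi$ (and $x_t^\pi=x_t$ for the initial indices $t\le0$), and arbitrary proposed actions $\tilde x_t\in\mathbb R^d$. At step $t$, ERL sets $x_t$ to a minimizer of $\tfrac12\|x-\tilde x_t\|^2$ over $x\in\mathcal X$ subject to $$\mathrm{cost}(x_{1:t-1})+f(x,y_t)+d(x,x_{t-q:t-1})+G(x,x_{t-q:t-1},x^\pi_{t-q:t})\le\lambda\,\mathrm{cost}(x^\pi_{1:t})+B,$$ where $x_{1:t-1}$ are ERL's previous actions and $$G(x,x_{t-q:t-1},x^\pi_{t-q:t})=\sum_{k=1}^{\min(q,T-t)}\Big\|C_kx+\sum_{i=1}^{q-k}C_{k+i}x_{t-i}-\sum_{i=0}^{q-k}C_{k+i}x^\pi_{t-i}\Big\|.$$ *)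

theory Defs
  imports "HOL-Analysis.Analysis"
begin

definition lp_norm :: "real \<Rightarrow> real^'d \<Rightarrow> real" where
  "lp_norm p v = (\<Sum>i\<in>UNIV. \<bar>v $ i\<bar> powr p) powr (1 / p)"

definition lp_opnorm :: "real \<Rightarrow> real^'d^'d \<Rightarrow> real" where
  "lp_opnorm p A = Sup {lp_norm p (A *v v) | v. lp_norm p v \<le> 1}"

definition mem_cost :: "real \<Rightarrow> (nat \<Rightarrow> real^'d^'d) \<Rightarrow> nat \<Rightarrow> (int \<Rightarrow> real^'d) \<Rightarrow> int \<Rightarrow> real^'d \<Rightarrow> real" where
  "mem_cost p C q x t v = lp_norm p (v - (\<Sum>i = 1..q. C i *v x (t - int i)))"

definition seq_cost :: "(real^'d \<Rightarrow> 'y \<Rightarrow> real) \<Rightarrow> real \<Rightarrow> (nat \<Rightarrow> real^'d^'d) \<Rightarrow> nat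
    \<Rightarrow> (int \<Rightarrow> real^'d) \<Rightarrow> (int \<Rightarrow> 'y) \<Rightarrow> int \<Rightarrow> real" where
  "seq_cost f p C q x y t = (\<Sum>\<tau> = 1..t. f (x \<tau>) (y \<tau>) + mem_cost p C q x \<tau> (x \<tau>))"

definition is_minimizer :: "(real^'d) set \<Rightarrow> (real^'d \<Rightarrow> 'y \<Rightarrow> real) \<Rightarrow> 'y \<Rightarrow> real^'d \<Rightarrow> bool" where
  "is_minimizer X f y xs \<longleftrightarrow> xs \<in> X \<and> (\<forall>x\<in>X. f xs y \<le> f x y)"

definition polyhedral :: "(real^'d) set \<Rightarrow> (real^'d \<Rightarrow> 'y \<Rightarrow> real) \<Rightarrow> real \<Rightarrow> real \<Rightarrow> 'y \<Rightarrow> bool" where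
  "polyhedral X f p \<alpha> y \<longleftrightarrow> (\<exists>!xs. is_minimizer X f y xs) \<and>
     (\<forall>xs x. is_minimizer X f y xs \<longrightarrow> x \<in> X \<longrightarrow> f x y - f xs y \<ge> \<alpha> * lp_norm p (x - xs))"

definition robust :: "(real^'d) set \<Rightarrow> (real^'d \<Rightarrow> 'y \<Rightarrow> real) \<Rightarrow> (int \<Rightarrow> 'y) \<Rightarrow> (int \<Rightarrow> real^'d) \<Rightarrow> int \<Rightarrow> real^'d" where
  "robust X f y x0 t = (if t \<le> 0 then x0 t else (THE xs. is_minimizer X f (y t) xs))"

definition G_term :: "real \<Rightarrow> (nat \<Rightarrow> real^'d^'d) \<Rightarrow> nat \<Rightarrow> nat \<Rightarrow> (int \<Rightarrow> real^'d) \<Rightarrow> (int \<Rightarrow> real^'d)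
    \<Rightarrow> int \<Rightarrow> real^'d \<Rightarrow> real" where
  "G_term p C q T x xpi t v = (\<Sum>k = 1..nat (min (int q) (int T - t)).
     lp_norm p (C k *v v + (\<Sum>i = 1..q - k. C (k + i) *v x (t - int i))
                         - (\<Sum>i = 0..q - k. C (k + i) *v xpi (t - int i))))"

definition erl_feasible :: "(real^'d) set \<Rightarrow> (real^'d \<Rightarrow> 'y \<Rightarrow> real) \<Rightarrow> real \<Rightarrow> (nat \<Rightarrow> real^'d^'d) \<Rightarrow> nat \<Rightarrow> nat
    \<Rightarrow> real \<Rightarrow> real \<Rightarrow> (int \<Rightarrow> real^'d) \<Rightarrow> (int \<Rightarrow> 'y) \<Rightarrow> (int \<Rightarrow> real^'d) \<Rightarrow> int \<Rightarrow> real^'d \<Rightarrow> bool" where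
  "erl_feasible X f p C q T lam B xpi y x t v \<longleftrightarrow> v \<in> X \<and>
     seq_cost f p C q x y (t - 1) + f v (y t) + mem_cost p C q x t v + G_term p C q T x xpi t v
       \<le> lam * seq_cost f p C q xpi y t + B"

text \<open>x is a run of ERL (parameters lambda, B, expert actions xpi, proposed actions xt)
  from initial actions x0 on contexts y: at every step t, x_t minimizes
  1/2 ||v - xt_t||^2 over the feasible v.\<close>
definition erl_run :: "(real^'d) set \<Rightarrow> (real^'d \<Rightarrow> 'y \<Rightarrow> real) \<Rightarrow> real \<Rightarrow> (nat \<Rightarrow> real^'d^'d) \<Rightarrow> nat \<Rightarrow> nat
    \<Rightarrow> real \<Rightarrow> real \<Rightarrow> (int \<Rightarrow> real^'d) \<Rightarrow> (int \<Rightarrow> real^'d) \<Rightarrow> (int \<Rightarrow> 'y) \<Rightarrow> (int \<Rightarrow> real^'d)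
    \<Rightarrow> (int \<Rightarrow> real^'d) \<Rightarrow> bool" where
  "erl_run X f p C q T lam B xpi xt y x0 x \<longleftrightarrow>
     (\<forall>t. 1 - int q \<le> t \<and> t \<le> 0 \<longrightarrow> x t = x0 t) \<and>
     (\<forall>t\<in>{1..int T}. erl_feasible X f p C q T lam B xpi y x t (x t) \<and>
        (\<forall>v. erl_feasible X f p C q T lam B xpi y x t v \<longrightarrow>
              (1/2) * (lp_norm p (x t - xt t))\<^sup>2 \<le> (1/2) * (lp_norm p (v - xt t))\<^sup>2))"

definition opt_cost :: "(real^'d) set \<Rightarrow> (real^'d \<Rightarrow> 'y \<Rightarrow> real) \<Rightarrow> real \<Rightarrow> (nat \<Rightarrow> real^'d^'d) \<Rightarrow> nat \<Rightarrow> nat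
    \<Rightarrow> (int \<Rightarrow> 'y) \<Rightarrow> (int \<Rightarrow> real^'d) \<Rightarrow> real" where
  "opt_cost X f p C q T y x0 = Inf {seq_cost f p C q z y (int T) | z.
     (\<forall>t\<in>{1..int T}. z t \<in> X) \<and> (\<forall>t. 1 - int q \<le> t \<and> t \<le> 0 \<longrightarrow> z t = x0 t)}"

end

theory Submission
  imports Defs
begin

text \<open>ERL only accepts actions keeping its running cost below \<open>lam\<close> times the expert's plus
  \<open>B\<close>; at the last step the nonnegative term \<open>G\<close> can be dropped, so ERL costs at most \<open>lam\<close>
  times Robust plus \<open>B\<close>. Robust is \<open>max ((\<beta> + 1) / \<alpha>) 1\<close>-competitive against every
  admissible sequence \<open>z\<close>: with \<open>e t = z t - x\<pi> t\<close>, the triangle inequality bounds Robust's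
  memory cost at step \<open>t\<close> by that of \<open>z\<close> plus \<open>\<parallel>e t\<parallel> + (\<Sum>i. \<parallel>C i\<parallel> * \<parallel>e (t - i)\<parallel>)\<close>, which
  sums to at most \<open>(\<beta> + 1) * (\<Sum>t. \<parallel>e t\<parallel>)\<close> because \<open>e\<close> vanishes on the initial actions; and
  \<open>\<alpha>\<close>-polyhedrality bounds \<open>\<alpha> * (\<Sum>t. \<parallel>e t\<parallel>)\<close> by the hitting-cost excess of \<open>z\<close> over Robust.\<close>

lemma lp_norm_nonneg: "lp_norm p v \<ge> 0"
  unfolding lp_norm_def by simp

lemma lp_norm_eq_0_iff:
  assumes "p \<ge> 1" shows "lp_norm p v = 0 \<longleftrightarrow> v = 0"
proof
  assume "lp_norm p v = 0"
  then have "(\<Sum>i\<in>UNIV. \<bar>v $ i\<bar> powr p) = 0"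
    unfolding lp_norm_def by simp
  then show "v = 0"
    by (subst (asm) sum_nonneg_eq_0_iff) (auto simp: vec_eq_iff)
qed (use assms in \<open>simp add: lp_norm_def\<close>)

lemma lp_norm_zero: "p \<ge> 1 \<Longrightarrow> lp_norm p 0 = 0"
  by (simp add: lp_norm_eq_0_iff)

lemma lp_norm_minus: "lp_norm p (- v) = lp_norm p v"
  unfolding lp_norm_def by simp

lemma lp_norm_powr:
  assumes "p \<ge> 1" shows "lp_norm p v powr p = (\<Sum>i\<in>UNIV. \<bar>v $ i\<bar> powr p)"
  using assms unfolding lp_norm_def by (simp add: powr_powr sum_nonneg)

lemma lp_norm_scaleR:
  assumes "p \<ge> 1" shows "lp_norm p (c *\<^sub>R v) = \<bar>c\<bar> * lp_norm p v"
proof -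
  have "(\<Sum>i\<in>UNIV. \<bar>(c *\<^sub>R v) $ i\<bar> powr p) = \<bar>c\<bar> powr p * (\<Sum>i\<in>UNIV. \<bar>v $ i\<bar> powr p)"
    by (simp add: sum_distrib_left abs_mult powr_mult)
  moreover have "(\<bar>c\<bar> powr p) powr (1/p) = \<bar>c\<bar>"
    using assms by (simp add: powr_powr)
  ultimately show ?thesis
    unfolding lp_norm_def by (simp add: powr_mult sum_nonneg)
qed

lemma abs_component_le_lp_norm:
  assumes "p \<ge> 1" shows "\<bar>v $ i\<bar> \<le> lp_norm p v"
proof -
  have "\<bar>v $ i\<bar> powr p \<le> (\<Sum>i\<in>UNIV. \<bar>v $ i\<bar> powr p)"
    by (rule member_le_sum) auto
  then have "(\<bar>v $ i\<bar> powr p) powr (1/p) \<le> (\<Sum>i\<in>UNIV. \<bar>v $ i\<bar> powr p) powr (1/p)"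
    using assms by (intro powr_mono2) auto
  then show ?thesis
    using assms unfolding lp_norm_def by (simp add: powr_powr)
qed

lemma lp_norm_le_if_components_le:
  fixes v :: "real^'d"
  assumes "p \<ge> 1" and "\<And>i. \<bar>v $ i\<bar> \<le> K"
  shows "lp_norm p v \<le> (real CARD('d) * K powr p) powr (1/p)"
proof -
  have "(\<Sum>i\<in>UNIV. \<bar>v $ i\<bar> powr p) \<le> (\<Sum>i\<in>(UNIV::'d set). K powr p)"
    using assms by (intro sum_mono powr_mono2) auto
  then show ?thesis
    unfolding lp_norm_def using assms by (intro powr_mono2) (auto intro: sum_nonneg)
qed

lemma convex_on_powr_nonneg:
  assumes p: "p \<ge> 1" shows "convex_on {0..} (\<lambda>x::real. x powr p)"
proof (rule convex_onI)
  have scaled: "(w * c) powr p \<le> w * c powr p" if "0 \<le> w" "w \<le> 1" "c \<ge> 0" for w c :: real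
  proof (cases "w = 0")
    case False
    then have "w powr p \<le> w" using that p powr_le_one_le by auto
    then show ?thesis using that by (simp add: powr_mult mult_right_mono)
  qed (use p in simp)
  fix t x y :: real
  assume t: "0 < t" "t < 1" and xy: "x \<in> {0..}" "y \<in> {0..}"
  show "((1 - t) *\<^sub>R x + t *\<^sub>R y) powr p \<le> (1 - t) * x powr p + t * y powr p"
  proof (cases "x = 0 \<or> y = 0")
    case True
    then show ?thesis using scaled[of t y] scaled[of "1 - t" x] t xy by auto
  next
    case False
    with xy have "x \<in> {0<..}" "y \<in> {0<..}" by auto
    with t show ?thesis by (intro convex_onD[OF powr_convex[OF p]]) auto
  qed
qed simp

lemma convex_on_abs_powr:
  assumes p: "p \<ge> 1" shows "convex_on UNIV (\<lambda>x::real. \<bar>x\<bar> powr p)"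
proof (rule convex_onI)
  fix t x y :: real
  assume t: "0 < t" "t < 1"
  have "\<bar>(1 - t) *\<^sub>R x + t *\<^sub>R y\<bar> powr p \<le> ((1 - t) *\<^sub>R \<bar>x\<bar> + t *\<^sub>R \<bar>y\<bar>) powr p"
    using t p by (intro powr_mono2) (auto intro: order.trans[OF abs_triangle_ineq] simp: abs_mult)
  also have "\<dots> \<le> (1 - t) * \<bar>x\<bar> powr p + t * \<bar>y\<bar> powr p"
    using t by (intro convex_onD[OF convex_on_powr_nonneg[OF p]]) auto
  finally show "\<bar>(1 - t) *\<^sub>R x + t *\<^sub>R y\<bar> powr p \<le> (1 - t) * \<bar>x\<bar> powr p + t * \<bar>y\<bar> powr p" .
qed simp

lemma convex_on_lp_norm_powr:
  assumes p: "p \<ge> 1" shows "convex_on UNIV (\<lambda>v::real^'d. \<Sum>i\<in>UNIV. \<bar>v $ i\<bar> powr p)"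
proof (rule convex_onI)
  fix t :: real and u v :: "real^'d"
  assume t: "0 < t" "t < 1"
  have "(\<Sum>i\<in>UNIV. \<bar>((1 - t) *\<^sub>R u + t *\<^sub>R v) $ i\<bar> powr p)
      \<le> (\<Sum>i\<in>UNIV. (1 - t) * \<bar>u $ i\<bar> powr p + t * \<bar>v $ i\<bar> powr p)"
    using t convex_onD[OF convex_on_abs_powr[OF p], of t] by (intro sum_mono) simp
  then show "(\<Sum>i\<in>UNIV. \<bar>((1 - t) *\<^sub>R u + t *\<^sub>R v) $ i\<bar> powr p)
      \<le> (1 - t) * (\<Sum>i\<in>UNIV. \<bar>u $ i\<bar> powr p) + t * (\<Sum>i\<in>UNIV. \<bar>v $ i\<bar> powr p)"
    by (simp add: sum.distrib sum_distrib_left)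
qed simp

text \<open>Minkowski's inequality, from convexity of \<open>\<lambda>v. \<Sum>i. \<bar>v $ i\<bar> powr p\<close> applied to the unit
  vectors \<open>u / \<parallel>u\<parallel>\<close> and \<open>v / \<parallel>v\<parallel>\<close>.\<close>

lemma lp_norm_triangle:
  fixes u v :: "real^'d"
  assumes p: "p \<ge> 1" shows "lp_norm p (u + v) \<le> lp_norm p u + lp_norm p v"
proof (cases "u = 0 \<or> v = 0")
  case True
  then show ?thesis using lp_norm_nonneg p by (auto simp: lp_norm_zero)
next
  case False
  define a where "a = lp_norm p u"
  define b where "b = lp_norm p v"
  have "a > 0" "b > 0"
    using False lp_norm_eq_0_iff[OF p] lp_norm_nonneg unfolding a_def b_def
    by (metis order_le_less)+
  define t where "t = b / (a + b)"
  have t: "0 \<le> t" "t \<le> 1" using \<open>a > 0\<close> \<open>b > 0\<close> by (auto simp: t_def)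
  have comb: "(1/(a+b)) *\<^sub>R (u + v) = (1 - t) *\<^sub>R ((1/a) *\<^sub>R u) + t *\<^sub>R ((1/b) *\<^sub>R v)"
    using \<open>a > 0\<close> \<open>b > 0\<close> by (simp add: t_def field_simps vec_eq_iff)
  have unit: "lp_norm p ((1/a) *\<^sub>R u) powr p = 1" "lp_norm p ((1/b) *\<^sub>R v) powr p = 1"
    using \<open>a > 0\<close> \<open>b > 0\<close> p by (simp_all add: lp_norm_scaleR a_def b_def)
  have "(\<Sum>i\<in>UNIV. \<bar>((1/(a+b)) *\<^sub>R (u + v)) $ i\<bar> powr p) \<le> 1"
    unfolding comb using unit t
    by (intro order.trans[OF convex_onD[OF convex_on_lp_norm_powr[OF p]]]) (auto simp: lp_norm_powr[OF p])
  then have "lp_norm p ((1/(a+b)) *\<^sub>R (u + v)) \<le> 1"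
    unfolding lp_norm_def using p by (intro powr_le1) (simp_all add: abs_of_nonneg sum_nonneg)
  then show ?thesis
    using \<open>a > 0\<close> \<open>b > 0\<close> p by (simp add: lp_norm_scaleR a_def b_def divide_le_eq)
qed

lemma lp_norm_sum_le:
  assumes p: "p \<ge> 1" and "finite S"
  shows "lp_norm p (\<Sum>i\<in>S. g i) \<le> (\<Sum>i\<in>S. lp_norm p (g i))"
  using assms(2)
proof (induction S rule: finite_induct)
  case (insert a S)
  then show ?case using lp_norm_triangle[OF p, of "g a" "sum g S"] by simp
qed (simp add: lp_norm_zero[OF p])

lemma bdd_above_lp_opnorm_set:
  fixes A :: "real^'d^'d"
  assumes p: "p \<ge> 1"
  shows "bdd_above {lp_norm p (A *v v) | v. lp_norm p v \<le> 1}"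
proof -
  define K where "K = (\<Sum>i\<in>UNIV. \<Sum>j\<in>UNIV. \<bar>A $ i $ j\<bar>)"
  have "lp_norm p (A *v v) \<le> (real CARD('d) * K powr p) powr (1/p)" if v: "lp_norm p v \<le> 1" for v
  proof (rule lp_norm_le_if_components_le[OF p])
    fix i
    have "\<bar>(A *v v) $ i\<bar> \<le> (\<Sum>j\<in>UNIV. \<bar>A $ i $ j * v $ j\<bar>)"
      unfolding matrix_vector_mult_def by (simp add: sum_abs)
    also have "\<dots> \<le> (\<Sum>j\<in>UNIV. \<bar>A $ i $ j\<bar>)"
      using abs_component_le_lp_norm[OF p, of v] v
      by (intro sum_mono) (simp add: abs_mult mult_left_le[OF order_trans[of _ "lp_norm p v"]])
    also have "\<dots> \<le> K"
      unfolding K_def by (rule member_le_sum[where f="\<lambda>i. \<Sum>j\<in>UNIV. \<bar>A $ i $ j\<bar>"]) (auto intro: sum_nonneg)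
    finally show "\<bar>(A *v v) $ i\<bar> \<le> K" .
  qed
  then show ?thesis by (auto simp: bdd_above_def)
qed

lemma lp_norm_le_lp_opnorm:
  fixes A :: "real^'d^'d"
  assumes p: "p \<ge> 1" and "lp_norm p v \<le> 1"
  shows "lp_norm p (A *v v) \<le> lp_opnorm p A"
  unfolding lp_opnorm_def using assms(2) by (intro cSup_upper bdd_above_lp_opnorm_set[OF p]) auto

lemma lp_opnorm_nonneg:
  assumes p: "p \<ge> 1" shows "lp_opnorm p (A::real^'d^'d) \<ge> 0"
  using lp_norm_le_lp_opnorm[OF p, of 0 A] lp_norm_nonneg[of p "A *v 0"] by (simp add: lp_norm_zero[OF p])

lemma lp_norm_matrix_vector_mult_le:
  fixes A :: "real^'d^'d"
  assumes p: "p \<ge> 1" shows "lp_norm p (A *v v) \<le> lp_opnorm p A * lp_norm p v"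
proof (cases "v = 0")
  case True
  then show ?thesis by (simp add: lp_norm_zero[OF p])
next
  case False
  define n where "n = lp_norm p v"
  have n: "n > 0"
    using False lp_norm_eq_0_iff[OF p, of v] lp_norm_nonneg[of p v] n_def by linarith
  have "lp_norm p (A *v ((1/n) *\<^sub>R v)) \<le> lp_opnorm p A"
    using n p by (intro lp_norm_le_lp_opnorm) (simp_all add: lp_norm_scaleR n_def)
  then have "lp_norm p (A *v v) / n \<le> lp_opnorm p A"
    using n p by (simp add: matrix_vector_mult_scaleR lp_norm_scaleR)
  then show ?thesis using n by (simp add: n_def divide_le_eq mult.commute)
qed

lemma sum_shifted_le:
  fixes n :: "int \<Rightarrow> real" and i q :: nat and T :: int
  assumes nonneg: "\<And>t. n t \<ge> 0" and initial: "\<And>t. 1 - int q \<le> t \<Longrightarrow> t \<le> 0 \<Longrightarrow> n t = 0"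
    and "i \<le> q"
  shows "(\<Sum>\<tau> = 1..T. n (\<tau> - int i)) \<le> (\<Sum>\<tau> = 1..T. n \<tau>)"
proof -
  define A where "A = (\<lambda>\<tau>. \<tau> - int i) ` {1..T}"
  have "(\<Sum>\<tau> = 1..T. n (\<tau> - int i)) = (\<Sum>s\<in>A. n s)"
    unfolding A_def by (subst sum.reindex) (auto simp: inj_on_def)
  also have "\<dots> = (\<Sum>s\<in>A \<inter> {1..T}. n s)"
    using \<open>i \<le> q\<close> by (intro sum.mono_neutral_right) (auto simp: A_def intro!: initial)
  also have "\<dots> \<le> (\<Sum>s\<in>{1..T}. n s)"
    using nonneg by (intro sum_mono2) auto
  finally show ?thesis .
qed

lemma seq_cost_last:
  assumes "t \<ge> 1"
  shows "seq_cost f p C q x y t = seq_cost f p C q x y (t - 1) + f (x t) (y t) + mem_cost p C q x t (x t)"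
proof -
  have "{1..t} = insert t {1..t - 1}" using assms by auto
  then show ?thesis unfolding seq_cost_def by simp
qed

lemma G_term_nonneg: "G_term p C q T x xpi t v \<ge> 0"
  unfolding G_term_def by (intro sum_nonneg) (simp add: lp_norm_nonneg)

lemma erl_cost_le_expert_cost:
  assumes run: "erl_run X f p C q T lam B xpi xt y x0 x" and "B \<ge> 0"
  shows "seq_cost f p C q x y (int T) \<le> lam * seq_cost f p C q xpi y (int T) + B"
proof (cases "T = 0")
  case True
  then show ?thesis using \<open>B \<ge> 0\<close> by (simp add: seq_cost_def)
next
  case False
  then have "erl_feasible X f p C q T lam B xpi y x (int T) (x (int T))"
    using run unfolding erl_run_def by auto
  moreover have "seq_cost f p C q x y (int T)
      = seq_cost f p C q x y (int T - 1) + f (x (int T)) (y (int T)) + mem_cost p C q x (int T) (x (int T))"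
    using False by (intro seq_cost_last) simp
  ultimately show ?thesis
    using G_term_nonneg[of p C q T x xpi "int T" "x (int T)"] unfolding erl_feasible_def by linarith
qed

lemma robust_is_minimizer:
  assumes "polyhedral X f p \<alpha> (y t)" and "t \<ge> 1"
  shows "is_minimizer X f (y t) (robust X f y x0 t)"
  using assms theI'[of "is_minimizer X f (y t)"] unfolding polyhedral_def robust_def by simp

lemma mem_cost_le_perturbed:
  assumes p: "p \<ge> 1"
  shows "mem_cost p C q w t (w t) \<le> mem_cost p C q z t (z t) + lp_norm p (z t - w t)
           + (\<Sum>i = 1..q. lp_opnorm p (C i) * lp_norm p (z (t - int i) - w (t - int i)))"
proof -
  define e where "e s = z s - w s" for s
  define E where "E = (\<Sum>i = 1..q. C i *v e (t - int i))"
  have decomposition: "w t - (\<Sum>i = 1..q. C i *v w (t - int i)) = (z t - (\<Sum>i = 1..q. C i *v z (t - int i))) + (- e t) + E"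
    unfolding E_def e_def by (simp add: matrix_vector_mult_diff_distrib sum_subtractf)
  have "mem_cost p C q w t (w t) \<le> mem_cost p C q z t (z t) + lp_norm p (- e t) + lp_norm p E"
    unfolding mem_cost_def decomposition
    using lp_norm_triangle[OF p, of "z t - (\<Sum>i = 1..q. C i *v z (t - int i)) + - e t" E]
      lp_norm_triangle[OF p, of "z t - (\<Sum>i = 1..q. C i *v z (t - int i))" "- e t"]
    by linarith
  also have "lp_norm p E \<le> (\<Sum>i = 1..q. lp_norm p (C i *v e (t - int i)))"
    unfolding E_def by (rule lp_norm_sum_le[OF p]) simp
  also have "\<dots> \<le> (\<Sum>i = 1..q. lp_opnorm p (C i) * lp_norm p (e (t - int i)))"
    by (intro sum_mono lp_norm_matrix_vector_mult_le[OF p])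
  finally show ?thesis unfolding e_def lp_norm_minus by simp
qed

lemma sum_mem_cost_le_perturbed:
  assumes p: "p \<ge> 1" and initial: "\<forall>t. 1 - int q \<le> t \<and> t \<le> 0 \<longrightarrow> z t = w t"
  shows "(\<Sum>\<tau> = 1..T. mem_cost p C q w \<tau> (w \<tau>)) \<le> (\<Sum>\<tau> = 1..T. mem_cost p C q z \<tau> (z \<tau>))
           + ((\<Sum>i = 1..q. lp_opnorm p (C i)) + 1) * (\<Sum>\<tau> = 1..T. lp_norm p (z \<tau> - w \<tau>))"
proof -
  define n where "n s = lp_norm p (z s - w s)" for s
  have shifted: "(\<Sum>\<tau> = 1..T. n (\<tau> - int i)) \<le> (\<Sum>\<tau> = 1..T. n \<tau>)" if "i \<in> {1..q}" for i
    using that initial by (intro sum_shifted_le[where q = q]) (auto simp: n_def lp_norm_nonneg lp_norm_zero[OF p])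
  have "(\<Sum>\<tau> = 1..T. mem_cost p C q w \<tau> (w \<tau>))
      \<le> (\<Sum>\<tau> = 1..T. mem_cost p C q z \<tau> (z \<tau>) + n \<tau> + (\<Sum>i = 1..q. lp_opnorm p (C i) * n (\<tau> - int i)))"
    unfolding n_def by (intro sum_mono mem_cost_le_perturbed[OF p])
  also have "\<dots> = (\<Sum>\<tau> = 1..T. mem_cost p C q z \<tau> (z \<tau>)) + (\<Sum>\<tau> = 1..T. n \<tau>)
      + (\<Sum>i = 1..q. lp_opnorm p (C i) * (\<Sum>\<tau> = 1..T. n (\<tau> - int i)))"
    by (simp add: sum.distrib sum_distrib_left sum.swap[of _ "{1..T}"])
  also have "\<dots> \<le> (\<Sum>\<tau> = 1..T. mem_cost p C q z \<tau> (z \<tau>)) + (\<Sum>\<tau> = 1..T. n \<tau>)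
      + (\<Sum>i = 1..q. lp_opnorm p (C i) * (\<Sum>\<tau> = 1..T. n \<tau>))"
    by (intro add_left_mono sum_mono mult_left_mono shifted lp_opnorm_nonneg[OF p])
  finally show ?thesis
    unfolding n_def by (simp add: sum_distrib_right algebra_simps)
qed

lemma sum_lp_norm_le_polyhedral_excess:
  assumes "\<forall>t\<in>{1..T}. polyhedral X f p \<alpha> (y t) \<and> is_minimizer X f (y t) (w t) \<and> z t \<in> X"
  shows "\<alpha> * (\<Sum>\<tau> = 1..T. lp_norm p (z \<tau> - w \<tau>))
           \<le> (\<Sum>\<tau> = 1..T. f (z \<tau>) (y \<tau>)) - (\<Sum>\<tau> = 1..T. f (w \<tau>) (y \<tau>))"
  unfolding sum_distrib_left sum_subtractf[symmetric]
  using assms unfolding polyhedral_def by (intro sum_mono) blast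

lemma minimizers_competitive:
  assumes p: "p \<ge> 1" and alpha: "\<alpha> > 0"
    and per_step: "\<forall>t\<in>{1..T}. polyhedral X f p \<alpha> (y t) \<and> is_minimizer X f (y t) (w t) \<and> z t \<in> X
                       \<and> f (w t) (y t) \<ge> 0"
    and initial: "\<forall>t. 1 - int q \<le> t \<and> t \<le> 0 \<longrightarrow> z t = w t"
  shows "seq_cost f p C q w y T
           \<le> max (((\<Sum>i = 1..q. lp_opnorm p (C i)) + 1) / \<alpha>) 1 * seq_cost f p C q z y T"
proof -
  define c where "c = ((\<Sum>i = 1..q. lp_opnorm p (C i)) + 1) / \<alpha>"
  define M where "M = max c 1"
  define N where "N = (\<Sum>\<tau> = 1..T. lp_norm p (z \<tau> - w \<tau>))"
  define Fw where "Fw = (\<Sum>\<tau> = 1..T. f (w \<tau>) (y \<tau>))"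
  define Fz where "Fz = (\<Sum>\<tau> = 1..T. f (z \<tau>) (y \<tau>))"
  define Mw where "Mw = (\<Sum>\<tau> = 1..T. mem_cost p C q w \<tau> (w \<tau>))"
  define Mz where "Mz = (\<Sum>\<tau> = 1..T. mem_cost p C q z \<tau> (z \<tau>))"
  have "Fw \<ge> 0" unfolding Fw_def using per_step by (intro sum_nonneg) auto
  have "Mz \<ge> 0" unfolding Mz_def mem_cost_def by (intro sum_nonneg lp_norm_nonneg)
  have "N \<ge> 0" unfolding N_def by (intro sum_nonneg lp_norm_nonneg)
  have excess: "\<alpha> * N \<le> Fz - Fw"
    unfolding N_def Fz_def Fw_def using per_step by (intro sum_lp_norm_le_polyhedral_excess) blast
  have "c \<ge> 0"
    unfolding c_def using alpha by (intro divide_nonneg_pos add_nonneg_nonneg sum_nonneg lp_opnorm_nonneg[OF p]) auto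
  have "Mw \<le> Mz + c * (\<alpha> * N)"
    unfolding Mw_def Mz_def N_def c_def using alpha sum_mem_cost_le_perturbed[OF p initial] by simp
  also have "\<dots> \<le> Mz + M * (Fz - Fw)"
    unfolding M_def using excess \<open>c \<ge> 0\<close> \<open>N \<ge> 0\<close> alpha
    by (intro add_left_mono mult_mono) auto
  finally have "Fw + Mw \<le> M * (Fz + Mz) - (M - 1) * (Fw + Mz)"
    by (simp add: algebra_simps)
  also have "\<dots> \<le> M * (Fz + Mz)"
    unfolding M_def using \<open>Fw \<ge> 0\<close> \<open>Mz \<ge> 0\<close> by simp
  finally show ?thesis
    unfolding seq_cost_def M_def c_def Fw_def Mw_def Fz_def Mz_def by (simp add: sum.distrib)
qed

lemma seq_cost_le_opt_cost:
  assumes "M > 0"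
    and admissible: "\<forall>t\<in>{1..int T}. w t \<in> X" "\<forall>t. 1 - int q \<le> t \<and> t \<le> 0 \<longrightarrow> w t = x0 t"
    and competitive: "\<And>z. \<forall>t\<in>{1..int T}. z t \<in> X \<Longrightarrow> \<forall>t. 1 - int q \<le> t \<and> t \<le> 0 \<longrightarrow> z t = x0 t
                        \<Longrightarrow> seq_cost f p C q w y (int T) \<le> M * seq_cost f p C q z y (int T)"
  shows "seq_cost f p C q w y (int T) \<le> M * opt_cost X f p C q T y x0"
proof -
  have "seq_cost f p C q w y (int T) / M \<le> opt_cost X f p C q T y x0"
    unfolding opt_cost_def using admissible competitive \<open>M > 0\<close>
    by (intro cInf_greatest) (auto simp: divide_le_eq mult.commute)
  then show ?thesis using \<open>M > 0\<close> by (simp add: divide_le_eq mult.commute)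
qed

theorem corollary2:
  fixes X :: "(real^'d) set" and Y :: "(real^'m) set"
    and f :: "real^'d \<Rightarrow> real^'m \<Rightarrow> real"
    and p :: real and q T :: nat and C :: "nat \<Rightarrow> real^'d^'d"
    and x0 xt x :: "int \<Rightarrow> real^'d" and y :: "int \<Rightarrow> real^'m"
    and \<alpha> lam B :: real
  assumes p: "p \<ge> 1" and q: "q \<ge> 1"
    and f_nonneg: "\<forall>v\<in>X. \<forall>w\<in>Y. f v w \<ge> 0"
    and init: "\<forall>t. 1 - int q \<le> t \<and> t \<le> 0 \<longrightarrow> x0 t \<in> X"
    and ctx: "\<forall>t\<in>{1..int T}. y t \<in> Y"
    and alpha: "\<alpha> > 0"
    and poly: "\<forall>t\<in>{1..int T}. polyhedral X f p \<alpha> (y t)"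
    and lam: "lam \<ge> 1" and B: "B \<ge> 0"
    and run: "erl_run X f p C q T lam B (robust X f y x0) xt y x0 x"
  shows "seq_cost f p C q x y (int T)
     \<le> lam * max (((\<Sum>i = 1..q. lp_opnorm p (C i)) + 1) / \<alpha>) 1 * opt_cost X f p C q T y x0 + B"
proof -
  define xpi where "xpi = robust X f y x0"
  define M where "M = max (((\<Sum>i = 1..q. lp_opnorm p (C i)) + 1) / \<alpha>) 1"
  have minimizer: "is_minimizer X f (y t) (xpi t)" if "t \<in> {1..int T}" for t
    using that poly robust_is_minimizer[of X f p \<alpha> y t] unfolding xpi_def by auto
  have xpi_initial: "xpi t = x0 t" if "t \<le> 0" for t
    using that unfolding xpi_def robust_def by simp
  have "seq_cost f p C q xpi y (int T) \<le> M * opt_cost X f p C q T y x0"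
  proof (rule seq_cost_le_opt_cost)
    fix z assume "\<forall>t\<in>{1..int T}. z t \<in> X" "\<forall>t. 1 - int q \<le> t \<and> t \<le> 0 \<longrightarrow> z t = x0 t"
    then show "seq_cost f p C q xpi y (int T) \<le> M * seq_cost f p C q z y (int T)"
      unfolding M_def using p alpha poly minimizer xpi_initial f_nonneg ctx
      by (intro minimizers_competitive) (auto simp: is_minimizer_def)
  qed (use minimizer xpi_initial in \<open>auto simp: M_def is_minimizer_def\<close>)
  then have "lam * seq_cost f p C q xpi y (int T) \<le> lam * (M * opt_cost X f p C q T y x0)"
    using lam by simp
  then show ?thesis
    using erl_cost_le_expert_cost[OF run[folded xpi_def] B] unfolding M_def by (simp add: mult.assoc)
qed

end
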